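(* Let $f(X)=\sum_{i=0}^{h-1}f_iX^{q^i}$ be an invertible $\mathbb F_q$-linearised polynomial over $\mathbb F_{q^h}$ with exactly two nonzero coefficients, and suppose that $f$ is not semi-linear over any subfield $\mathbb F_{q^s}$ of $\mathbb F_{q^h}$ with $\mathbb F_{q^s}\supsetneq\mathbb F_q$. Then all coefficients of $f^{-1}(X)=\sum_{i=0}^{h-1}\overline f_iX^{q^i}$ are nonzero.
   Context: An $\mathbb F_q$-linearised polynomial over $\mathbb F_{q^h}$ is $\sum_{l=0}^{h-1}a_lX^{q^l}$ with $a_l\in\mathbb F_{q^h}$, viewed as a map of $\mathbb F_{q^h}$; invertible means bijective, and its inverse map is again such a polynomial. For a subfield $K$ of $\mathbb F_{q^h}$, $f$ is $K$-semi-linear if there is a field automorphism $\sigma$ of $\mathbb F_{q^h}$ with $f(\alpha x)=\alpha^\sigma f(x)$ for all $\alpha\in K$, $x\in\mathbb F_{q^h}$. *)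

theory Defs
  imports "HOL-Computational_Algebra.Primes"
begin

definition lin_poly :: "nat \<Rightarrow> nat \<Rightarrow> (nat \<Rightarrow> 'a::field) \<Rightarrow> 'a \<Rightarrow> 'a" where
  "lin_poly q h a x = (\<Sum>l<h. a l * x ^ (q ^ l))"

definition Fq :: "nat \<Rightarrow> 'a::field set" where
  "Fq q = {x. x ^ q = x}"

definition is_subfield :: "'a::field set \<Rightarrow> bool" where
  "is_subfield K \<longleftrightarrow> 0 \<in> K \<and> 1 \<in> K \<and> (\<forall>x\<in>K. \<forall>y\<in>K. x + y \<in> K \<and> x * y \<in> K)
     \<and> (\<forall>x\<in>K. - x \<in> K) \<and> (\<forall>x\<in>K. x \<noteq> 0 \<longrightarrow> inverse x \<in> K)"

definition field_automorphism :: "('a::field \<Rightarrow> 'a) \<Rightarrow> bool" where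
  "field_automorphism \<sigma> \<longleftrightarrow> bij \<sigma> \<and> \<sigma> 1 = 1 \<and>
     (\<forall>x y. \<sigma> (x + y) = \<sigma> x + \<sigma> y) \<and> (\<forall>x y. \<sigma> (x * y) = \<sigma> x * \<sigma> y)"

definition semilinear_over :: "'a::field set \<Rightarrow> ('a \<Rightarrow> 'a) \<Rightarrow> bool" where
  "semilinear_over K f \<longleftrightarrow>
     (\<exists>\<sigma>. field_automorphism \<sigma> \<and> (\<forall>\<alpha>\<in>K. \<forall>x. f (\<alpha> * x) = \<sigma> \<alpha> * f x))"

end

theory Submission
  imports Defs "HOL-Computational_Algebra.Polynomial" "HOL-Number_Theory.Cong"
begin

text \<open>
  Write f = a X^{q^i} + b X^{q^j} with i < j. If d = gcd (j - i) h were larger than 1, every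
  \<alpha> in the subfield F_{q^d} would satisfy \<alpha>^{q^j} = \<alpha>^{q^i}, so f would be semilinear over
  F_{q^d} with respect to the automorphism x \<mapsto> x^{q^i}; hence j - i is prime to h.
  A linearised polynomial of q-degree below h is determined by the map it induces, so composing
  f with its inverse and comparing coefficients gives a fbar_{m-i}^{q^i} + b fbar_{m-j}^{q^j} = 0
  for every m \<noteq> 0, indices taken mod h. Thus fbar_t = 0 iff fbar_{t+(j-i)} = 0 for every t
  except t = -j. As j - i generates Z/hZ, the walk -j, -j + (j - i), ... visits every index
  before it returns to -j, so the coefficients of fbar are all zero or all nonzero; and fbar is
  not zero.
\<close>

section \<open>Finite fields\<close>

(* The library's finite_field_power_card_eq_same needs the sort finite_field, not {finite,field}. *)
lemma finite_field_power_card: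
  fixes x :: "'a::{finite,field}"
  shows "x ^ card (UNIV :: 'a set) = x"
proof (cases "x = 0")
  case False
  define U where "U = UNIV - {0::'a}"
  have "(\<Prod>y\<in>U. x * y) = (\<Prod>y\<in>U. y)"
    using False by (intro prod.reindex_bij_witness[of _ "\<lambda>y. y / x" "\<lambda>y. x * y"]) (auto simp: U_def)
  then have "x ^ card U * (\<Prod>y\<in>U. y) = 1 * (\<Prod>y\<in>U. y)"
    by (simp add: prod.distrib)
  moreover have "(\<Prod>y\<in>U. y) \<noteq> 0"
    by (simp add: U_def)
  ultimately have "x ^ card U = 1"
    by (simp only: mult_cancel_right) simp
  moreover have "card (UNIV :: 'a set) = Suc (card U)"
    using card_Suc_Diff1[of UNIV "0::'a"] by (simp add: U_def)
  ultimately show ?thesis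
    by simp
qed (simp add: finite_UNIV_card_ge_0)

lemma power_power_eq_self:
  fixes x :: "'a::monoid_mult"
  assumes "x ^ c = x"
  shows "x ^ (c ^ d) = x"
  by (induction d) (simp_all add: power_mult mult.commute assms)

lemma power_q_power_mod:
  fixes x :: "'a::{finite,field}"
  assumes "card (UNIV :: 'a set) = q ^ h"
  shows "x ^ (q ^ N) = x ^ (q ^ (N mod h))"
proof -
  have "q ^ N = (q ^ h) ^ (N div h) * q ^ (N mod h)"
    by (metis mult_div_mod_eq power_add power_mult)
  then have "x ^ (q ^ N) = (x ^ ((q ^ h) ^ (N div h))) ^ (q ^ (N mod h))"
    by (simp add: power_mult)
  then show ?thesis
    using power_power_eq_self[of x "q ^ h"] finite_field_power_card[of x] assms by simp
qed

lemma prime_CHAR_finite_field: "prime CHAR('a::{finite,field})"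
  using prime_CHAR_semidom finite_imp_CHAR_pos[where ?'a = 'a] by auto

lemma two_le_CHAR_power:
  assumes "0 < n"
  shows "2 \<le> CHAR('a::{finite,field}) ^ n"
  using prime_ge_2_nat[OF prime_CHAR_finite_field[where ?'a = 'a]] self_le_power[of "CHAR('a)" n] assms
  by linarith

lemma of_nat_card_UNIV_eq_0: "of_nat (card (UNIV :: 'a::{finite,ring_1} set)) = (0::'a)"
proof -
  have "(\<Sum>x\<in>UNIV. x + 1) = (\<Sum>x\<in>UNIV. x :: 'a)"
    by (rule sum.reindex_bij_witness[of _ "\<lambda>y. y - 1" "\<lambda>y. y + 1"]) auto
  then show ?thesis
    by (simp add: sum.distrib)
qed

lemma CHAR_power_of_prime_power_card:
  assumes "\<exists>p n. prime p \<and> 0 < n \<and> q = p ^ n"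
    and "card (UNIV :: 'a::{finite,field} set) = q ^ h" and "0 < h"
  obtains n where "0 < n" and "q = CHAR('a) ^ n"
proof -
  obtain p n where "prime p" and "0 < n" and q: "q = p ^ n"
    using assms(1) by blast
  have "CHAR('a) dvd card (UNIV :: 'a set)"
    by (simp flip: of_nat_eq_0_iff_char_dvd add: of_nat_card_UNIV_eq_0)
  then have "CHAR('a) dvd p ^ (n * h)"
    using assms(2) q by (simp add: power_mult)
  then have "CHAR('a) dvd p"
    using prime_CHAR_finite_field prime_dvd_power by blast
  then have "CHAR('a) = p"
    using prime_CHAR_finite_field[where ?'a = 'a] \<open>prime p\<close> by (simp add: primes_dvd_imp_eq)
  with \<open>0 < n\<close> q that show ?thesis
    by blast
qed

lemma additive_card_UNIV_eq:
  fixes T :: "'a::{finite,ab_group_add} \<Rightarrow> 'b::ab_group_add"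
  assumes add: "\<And>x y. T (x + y) = T x + T y"
  shows "card (UNIV :: 'a set) = card (range T) * card {x. T x = 0}"
proof -
  have T_diff: "T (x - y) = T x - T y" for x y
    using add[of "x - y" y] by (simp add: algebra_simps)
  have fibre: "card (T -` {T x0}) = card {x. T x = 0}" for x0
  proof -
    have "T -` {T x0} = (\<lambda>z. x0 + z) ` {x. T x = 0}"
    proof (intro equalityI subsetI)
      fix x assume "x \<in> T -` {T x0}"
      then show "x \<in> (\<lambda>z. x0 + z) ` {x. T x = 0}"
        by (intro image_eqI[of _ _ "x - x0"]) (auto simp: T_diff)
    qed (auto simp: add)
    then show ?thesis
      by (simp add: card_image)
  qed
  have "card (UNIV :: 'a set) = card (\<Union>y\<in>range T. T -` {y})"
    by (rule arg_cong[where f = card]) auto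
  also have "\<dots> = (\<Sum>y\<in>range T. card (T -` {y}))"
    by (rule card_UN_disjoint) auto
  also have "\<dots> = (\<Sum>y\<in>range T. card {x. T x = 0})"
    by (rule sum.cong) (auto simp: fibre)
  finally show ?thesis
    by simp
qed

section \<open>Linearised polynomials\<close>

lemma card_lin_poly_roots_le:
  fixes c :: "nat \<Rightarrow> 'a::field"
  assumes "2 \<le> q" and "l < h" and "c l \<noteq> 0"
  shows "card {x. lin_poly q h c x = 0} \<le> q ^ (h - 1)"
proof -
  define P where "P = (\<Sum>l<h. Polynomial.monom (c l) (q ^ l))"
  have "coeff P (q ^ l) = (\<Sum>l'<h. if l' = l then c l' else 0)"
    using \<open>2 \<le> q\<close> by (simp add: P_def coeff_sum)
  then have "P \<noteq> 0"
    using assms(2,3) by auto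
  moreover have "degree P \<le> q ^ (h - 1)"
    unfolding P_def using \<open>2 \<le> q\<close>
    by (intro degree_sum_le order.trans[OF degree_monom_le] power_increasing) auto
  moreover have "poly P x = lin_poly q h c x" for x
    by (simp add: P_def lin_poly_def poly_sum poly_monom)
  ultimately show ?thesis
    using card_poly_roots_bound[of P] by simp
qed

lemma lin_poly_coeff_unique:
  fixes a b :: "nat \<Rightarrow> 'a::{finite,field}"
  assumes "2 \<le> q" and "q ^ (h - 1) < card (UNIV :: 'a set)"
    and "\<And>x. lin_poly q h a x = lin_poly q h b x" and "l < h"
  shows "a l = b l"
proof (rule ccontr)
  assume "a l \<noteq> b l"
  have "lin_poly q h (\<lambda>l. a l - b l) x = 0" for x
    using assms(3)[of x] by (simp add: lin_poly_def sum_subtractf left_diff_distrib)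
  then have "card (UNIV :: 'a set) \<le> q ^ (h - 1)"
    using card_lin_poly_roots_le[of q l h "\<lambda>l. a l - b l"] assms \<open>a l \<noteq> b l\<close> by simp
  then show False
    using assms(2) by simp
qed

lemma card_Fq_le:
  assumes "2 \<le> q"
  shows "card (Fq q :: 'a::field set) \<le> q"
proof -
  have "Fq q = {x::'a. lin_poly q 2 (\<lambda>l. if l = 0 then -1 else 1) x = 0}"
    by (simp add: Fq_def lin_poly_def numeral_2_eq_2)
  then show ?thesis
    using card_lin_poly_roots_le[of q 1 2 "\<lambda>l. if l = 0 then -1 else 1::'a"] assms by simp
qed

lemma lin_poly_delta:
  assumes "0 < h"
  shows "lin_poly q h (\<lambda>m. if m = 0 then 1 else 0) x = x"
proof -
  have "lin_poly q h (\<lambda>m. if m = 0 then 1 else 0) x = (\<Sum>m<h. if m = 0 then x ^ q ^ m else 0)"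
    unfolding lin_poly_def by (rule sum.cong) auto
  then show ?thesis
    using assms by simp
qed

lemma mod_add_diff_mod:
  fixes a c h :: nat
  assumes "c \<le> h"
  shows "(a mod h + h - c) mod h = (a + h - c) mod h"
  using assms by (simp add: mod_add_left_eq flip: Nat.add_diff_assoc)

lemma lin_poly_power_q_power:
  fixes b :: "nat \<Rightarrow> 'a::{finite,field}"
  assumes q: "q = CHAR('a) ^ n" and card: "card (UNIV :: 'a set) = q ^ h" and "c < h"
  shows "lin_poly q h b x ^ (q ^ c) = lin_poly q h (\<lambda>m. b ((m + h - c) mod h) ^ (q ^ c)) x"
proof -
  have frobenius: "(\<Sum>l<h. g l) ^ (q ^ c) = (\<Sum>l<h. g l ^ (q ^ c))" for g :: "nat \<Rightarrow> 'a"
    by (rule freshmans_dream_sum'[OF prime_CHAR_finite_field, where n = "n * c"]) (simp add: q power_mult)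
  have "lin_poly q h b x ^ (q ^ c) = (\<Sum>l<h. b l ^ (q ^ c) * x ^ (q ^ (l + c)))"
    unfolding lin_poly_def frobenius by (simp add: power_mult_distrib power_add power_mult)
  also have "\<dots> = (\<Sum>l<h. b l ^ (q ^ c) * x ^ (q ^ ((l + c) mod h)))"
    by (rule sum.cong[OF refl]) (metis power_q_power_mod[OF card])
  also have "\<dots> = lin_poly q h (\<lambda>m. b ((m + h - c) mod h) ^ (q ^ c)) x"
    unfolding lin_poly_def
    by (rule sum.reindex_bij_witness[of _ "\<lambda>m. (m + h - c) mod h" "\<lambda>l. (l + c) mod h"])
       (use \<open>c < h\<close> in \<open>auto simp: mod_add_diff_mod mod_add_left_eq\<close>)
  finally show ?thesis .
qed

lemma lin_poly_compose:
  fixes a b :: "nat \<Rightarrow> 'a::{finite,field}"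
  assumes "q = CHAR('a) ^ n" and "card (UNIV :: 'a set) = q ^ h"
  shows "lin_poly q h a (lin_poly q h b x)
    = lin_poly q h (\<lambda>m. \<Sum>c<h. a c * b ((m + h - c) mod h) ^ (q ^ c)) x"
proof -
  have "lin_poly q h a (lin_poly q h b x)
      = (\<Sum>c<h. a c * lin_poly q h (\<lambda>m. b ((m + h - c) mod h) ^ (q ^ c)) x)"
    unfolding lin_poly_def[of q h a]
    by (rule sum.cong[OF refl]) (simp add: lin_poly_power_q_power[OF assms])
  also have "\<dots> = (\<Sum>c<h. \<Sum>m<h. a c * b ((m + h - c) mod h) ^ (q ^ c) * x ^ (q ^ m))"
    by (simp add: lin_poly_def sum_distrib_left mult.assoc)
  also have "\<dots> = (\<Sum>m<h. \<Sum>c<h. a c * b ((m + h - c) mod h) ^ (q ^ c) * x ^ (q ^ m))"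
    by (rule sum.swap)
  also have "\<dots> = lin_poly q h (\<lambda>m. \<Sum>c<h. a c * b ((m + h - c) mod h) ^ (q ^ c)) x"
    by (simp add: lin_poly_def sum_distrib_right)
  finally show ?thesis .
qed

lemma lin_poly_right_inverse_coeffs:
  fixes a b :: "nat \<Rightarrow> 'a::{finite,field}"
  assumes q: "q = CHAR('a) ^ n" and "0 < n" and card: "card (UNIV :: 'a set) = q ^ h"
    and right_inverse: "\<And>x. lin_poly q h a (lin_poly q h b x) = x" and "m < h"
  shows "(\<Sum>c<h. a c * b ((m + h - c) mod h) ^ (q ^ c)) = (if m = 0 then 1 else 0)"
proof (rule lin_poly_coeff_unique[of q h _ _ m])
  show "2 \<le> q"
    unfolding q using \<open>0 < n\<close> by (rule two_le_CHAR_power)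
  then show "q ^ (h - 1) < card (UNIV :: 'a set)"
    unfolding card using \<open>m < h\<close> by (intro power_strict_increasing) auto
  show "lin_poly q h (\<lambda>m. \<Sum>c<h. a c * b ((m + h - c) mod h) ^ (q ^ c)) x
      = lin_poly q h (\<lambda>m. if m = 0 then 1 else 0) x" for x
  proof -
    have "lin_poly q h (\<lambda>m. \<Sum>c<h. a c * b ((m + h - c) mod h) ^ (q ^ c)) x
        = lin_poly q h a (lin_poly q h b x)"
      by (rule lin_poly_compose[OF q card, symmetric])
    also have "\<dots> = x"
      by (rule right_inverse)
    also have "\<dots> = lin_poly q h (\<lambda>m. if m = 0 then 1 else 0) x"
      using \<open>m < h\<close> by (intro lin_poly_delta[symmetric]) simp
    finally show ?thesis .
  qed
qed fact

lemma lin_poly_right_inverse_nonzero: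
  fixes a b :: "nat \<Rightarrow> 'a::field"
  assumes "0 < q" and right_inverse: "\<And>x. lin_poly q h a (lin_poly q h b x) = x"
  obtains t where "t < h" and "b t \<noteq> 0"
proof -
  have "lin_poly q h a 0 = 0"
    using \<open>0 < q\<close> by (simp add: lin_poly_def power_0_left)
  then have "lin_poly q h b 1 \<noteq> 0"
    using right_inverse[of 1] by auto
  moreover have "lin_poly q h b 1 = 0" if "\<forall>t<h. b t = 0"
    using that by (simp add: lin_poly_def)
  ultimately show ?thesis
    using that by blast
qed

section \<open>Subfields and semilinearity\<close>

lemma is_subfield_frobenius_fixed:
  assumes "prime CHAR('a::field)"
  shows "is_subfield {x::'a. x ^ (CHAR('a) ^ n) = x}"
proof -
  have add: "(x + y) ^ (CHAR('a) ^ n) = x ^ (CHAR('a) ^ n) + y ^ (CHAR('a) ^ n)" for x y :: 'a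
    by (rule freshmans_dream'[OF assms refl])
  have pos: "0 < CHAR('a) ^ n"
    using prime_gt_0_nat[OF assms] by simp
  have neg: "(- x) ^ (CHAR('a) ^ n) = - (x ^ (CHAR('a) ^ n))" for x :: 'a
    by (metis add zero_power[OF pos] eq_neg_iff_add_eq_0)
  show ?thesis
    unfolding is_subfield_def using pos by (auto simp: add neg power_mult_distrib power_inverse)
qed

lemma field_automorphism_frobenius_power:
  "field_automorphism (\<lambda>x::'a::{finite,field}. x ^ (CHAR('a) ^ n))"
proof -
  have add: "(x + y) ^ (CHAR('a) ^ n) = x ^ (CHAR('a) ^ n) + y ^ (CHAR('a) ^ n)" for x y :: 'a
    by (rule freshmans_dream'[OF prime_CHAR_finite_field refl])
  have "inj (\<lambda>x::'a. x ^ (CHAR('a) ^ n))"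
  proof (rule injI)
    fix x y :: 'a
    assume "x ^ (CHAR('a) ^ n) = y ^ (CHAR('a) ^ n)"
    then have "(x - y) ^ (CHAR('a) ^ n) = 0"
      using add[of "x - y" y] by simp
    then show "x = y"
      by simp
  qed
  then have "bij (\<lambda>x::'a. x ^ (CHAR('a) ^ n))"
    by (simp add: bij_def finite_UNIV_inj_surj)
  then show ?thesis
    unfolding field_automorphism_def by (simp add: add power_mult_distrib)
qed

lemma card_fixed_field_ge:
  assumes q: "q = CHAR('a::{finite,field}) ^ n" and "0 < n"
    and card: "card (UNIV :: 'a set) = q ^ h" and "s dvd h" and "0 < h"
  shows "q ^ s \<le> card {x::'a. x ^ (q ^ s) = x}"
proof -
  obtain m where h: "h = s * m"
    using \<open>s dvd h\<close> by blast
  with \<open>0 < h\<close> have "0 < m"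
    by simp
  have "0 < q"
    using q prime_gt_0_nat[OF prime_CHAR_finite_field[where ?'a = 'a]] by simp
  have q_s: "q ^ s = CHAR('a) ^ (n * s)"
    by (simp add: q power_mult)
  have card_s: "card (UNIV :: 'a set) = (q ^ s) ^ m"
    by (simp add: card h power_mult)
  have "2 \<le> q ^ s"
    unfolding q_s using \<open>0 < n\<close> \<open>0 < h\<close> h by (intro two_le_CHAR_power) simp
  \<comment> \<open>the trace onto the fixed field: additive, with image in the fixed field and small kernel\<close>
  define T where "T = lin_poly (q ^ s) m (\<lambda>_. 1::'a)"
  have frobenius: "(x + y) ^ ((q ^ s) ^ l) = x ^ ((q ^ s) ^ l) + y ^ ((q ^ s) ^ l)" for x y :: 'a and l
    by (rule freshmans_dream'[OF prime_CHAR_finite_field, where n = "n * s * l"]) (simp add: q_s power_mult)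
  have T_add: "T (x + y) = T x + T y" for x y
    unfolding T_def lin_poly_def by (simp add: frobenius sum.distrib)
  have T_fixed: "T x ^ (q ^ s) = T x" for x
  proof (cases "m = 1")
    case True
    then show ?thesis
      using finite_field_power_card[of x] card_s by (simp add: T_def lin_poly_def)
  next
    case False
    then show ?thesis
      using lin_poly_power_q_power[OF q_s card_s, of 1 "\<lambda>_. 1" x] \<open>0 < m\<close> by (simp add: T_def)
  qed
  have "q ^ s * (q ^ s) ^ (m - 1) = (q ^ s) ^ m"
    using \<open>0 < m\<close> by (cases m) simp_all
  also have "\<dots> = card (range T) * card {x. T x = 0}"
    using additive_card_UNIV_eq[of T] T_add card_s by simp
  also have "\<dots> \<le> card {x::'a. x ^ (q ^ s) = x} * (q ^ s) ^ (m - 1)"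
  proof (rule mult_le_mono)
    show "card (range T) \<le> card {x::'a. x ^ (q ^ s) = x}"
      using T_fixed by (intro card_mono) auto
    show "card {x. T x = 0} \<le> (q ^ s) ^ (m - 1)"
      unfolding T_def using \<open>2 \<le> q ^ s\<close> \<open>0 < m\<close> by (intro card_lin_poly_roots_le[of _ 0]) auto
  qed
  finally show ?thesis
    by (rule mult_right_le_imp_le) (use \<open>0 < q\<close> in simp)
qed

lemma Fq_psubset_fixed_field:
  assumes q: "q = CHAR('a::{finite,field}) ^ n" and "0 < n"
    and card: "card (UNIV :: 'a set) = q ^ h" and "s dvd h" and "0 < h" and "2 \<le> s"
  shows "Fq q \<subset> {x::'a. x ^ (q ^ s) = x}"
proof
  show "Fq q \<subseteq> {x::'a. x ^ (q ^ s) = x}"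
    unfolding Fq_def using power_power_eq_self by blast
  have "2 \<le> q"
    unfolding q using \<open>0 < n\<close> by (rule two_le_CHAR_power)
  then have "q < q ^ s"
    using power_strict_increasing[of 1 s q] \<open>2 \<le> s\<close> by simp
  then have "card (Fq q :: 'a set) < q ^ s"
    using card_Fq_le[OF \<open>2 \<le> q\<close>, where ?'a = 'a] by linarith
  then show "Fq q \<noteq> {x::'a. x ^ (q ^ s) = x}"
    using card_fixed_field_ge[OF assms(1-5)] by auto
qed

lemma semilinear_over_two_term:
  fixes F :: "'a::{finite,field} \<Rightarrow> 'a"
  assumes q: "q = CHAR('a) ^ n" and F: "\<And>x. F x = a * x ^ (q ^ i) + b * x ^ (q ^ j)"
    and "i \<le> j" and "s dvd j - i"
  shows "semilinear_over {x. x ^ (q ^ s) = x} F"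
  unfolding semilinear_over_def
proof (intro exI conjI ballI allI)
  show "field_automorphism (\<lambda>x::'a. x ^ (q ^ i))"
    using field_automorphism_frobenius_power[of "n * i"] by (simp add: q power_mult)
  fix \<alpha> x :: 'a
  assume "\<alpha> \<in> {x. x ^ (q ^ s) = x}"
  then have "\<alpha> ^ (q ^ (j - i)) = \<alpha>"
    using \<open>s dvd j - i\<close> power_power_eq_self[of \<alpha> "q ^ s"] by (auto simp: power_mult)
  moreover have "q ^ j = q ^ (j - i) * q ^ i"
    using \<open>i \<le> j\<close> by (simp flip: power_add)
  ultimately have "\<alpha> ^ (q ^ j) = \<alpha> ^ (q ^ i)"
    by (simp add: power_mult)
  then show "F (\<alpha> * x) = \<alpha> ^ (q ^ i) * F x"
    by (simp add: F algebra_simps)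
qed

section \<open>Linearised binomials\<close>

lemma card_support_eq_2E:
  fixes f :: "nat \<Rightarrow> 'a::zero"
  assumes "card {l. l < h \<and> f l \<noteq> 0} = 2"
  obtains i j where "i < j" and "j < h" and "f i \<noteq> 0" and "f j \<noteq> 0"
    and "\<And>l. l < h \<Longrightarrow> l \<noteq> i \<Longrightarrow> l \<noteq> j \<Longrightarrow> f l = 0"
proof -
  obtain a b where ab: "{l. l < h \<and> f l \<noteq> 0} = {a, b}" and "a \<noteq> b"
    using assms card_2_iff by metis
  show ?thesis
  proof (cases "a < b")
    case True
    then show ?thesis
      using that[of a b] ab by blast
  next
    case False
    then show ?thesis
      using that[of b a] ab \<open>a \<noteq> b\<close> by (simp add: set_eq_iff) metis
  qed
qed

lemma sum_two_support:
  fixes a :: "nat \<Rightarrow> 'a::semiring_0"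
  assumes "i < j" and "j < h" and "\<And>l. l < h \<Longrightarrow> l \<noteq> i \<Longrightarrow> l \<noteq> j \<Longrightarrow> a l = 0"
  shows "(\<Sum>l<h. a l * g l) = a i * g i + a j * g j"
  using assms by (subst sum.mono_neutral_right[of "{..<h}" "{i, j}"]) auto

lemma coprime_of_not_semilinear_two_term:
  fixes F :: "'a::{finite,field} \<Rightarrow> 'a"
  assumes q: "q = CHAR('a) ^ n" and "0 < n" and card: "card (UNIV :: 'a set) = q ^ h"
    and F: "\<And>x. F x = a * x ^ (q ^ i) + b * x ^ (q ^ j)" and "i < j" and "0 < h"
    and not_semilinear: "\<forall>K. is_subfield K \<and> Fq q \<subset> K \<longrightarrow> \<not> semilinear_over K F"
  shows "coprime (j - i) h"
proof (rule ccontr)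
  assume "\<not> coprime (j - i) h"
  define s where "s = gcd (j - i) h"
  have "s \<noteq> 1" and "0 < s"
    using \<open>\<not> coprime (j - i) h\<close> \<open>0 < h\<close> by (simp_all add: s_def coprime_iff_gcd_eq_1)
  then have "2 \<le> s"
    by linarith
  have "is_subfield {x::'a. x ^ (q ^ s) = x}"
    using is_subfield_frobenius_fixed[OF prime_CHAR_finite_field, of "n * s"] by (simp add: q power_mult)
  moreover have "Fq q \<subset> {x::'a. x ^ (q ^ s) = x}"
    using \<open>2 \<le> s\<close> \<open>0 < h\<close> by (intro Fq_psubset_fixed_field[OF q \<open>0 < n\<close> card]) (simp_all add: s_def)
  moreover have "semilinear_over {x::'a. x ^ (q ^ s) = x} F"
    using \<open>i < j\<close> by (intro semilinear_over_two_term[OF q F]) (simp_all add: s_def)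
  ultimately show False
    using not_semilinear by blast
qed

lemma two_term_right_inverse_coeff_eq_0_iff:
  fixes a b :: "nat \<Rightarrow> 'a::{finite,field}"
  assumes q: "q = CHAR('a) ^ n" and "0 < n" and card: "card (UNIV :: 'a set) = q ^ h"
    and "i < j" and "j < h" and "a i \<noteq> 0" and "a j \<noteq> 0"
    and support: "\<And>l. l < h \<Longrightarrow> l \<noteq> i \<Longrightarrow> l \<noteq> j \<Longrightarrow> a l = 0"
    and right_inverse: "\<And>x. lin_poly q h a (lin_poly q h b x) = x"
    and "t < h" and "t \<noteq> (h - j) mod h"
  shows "b t = 0 \<longleftrightarrow> b ((t + (j - i)) mod h) = 0"
proof -
  \<comment> \<open>compare the coefficients of X^{q^m} on both sides, where m - j = t and m - i = t + (j - i)\<close>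
  define m where "m = (t + j) mod h"
  have "(m + h - j) mod h = t"
    using \<open>j < h\<close> \<open>t < h\<close> by (simp add: m_def mod_add_diff_mod)
  have "m \<noteq> 0"
  proof
    assume "m = 0"
    with \<open>(m + h - j) mod h = t\<close> \<open>t \<noteq> (h - j) mod h\<close> show False
      by simp
  qed
  have "(m + h - i) mod h = (t + j + h - i) mod h"
    using \<open>i < j\<close> \<open>j < h\<close> unfolding m_def by (intro mod_add_diff_mod) simp
  also have "t + j + h - i = t + (j - i) + h"
    using \<open>i < j\<close> by simp
  finally have "(m + h - i) mod h = (t + (j - i)) mod h"
    by simp
  with \<open>(m + h - j) mod h = t\<close> \<open>m \<noteq> 0\<close>
  have "a i * b ((t + (j - i)) mod h) ^ (q ^ i) + a j * b t ^ (q ^ j) = 0"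
    using lin_poly_right_inverse_coeffs[OF q \<open>0 < n\<close> card right_inverse, of m] \<open>j < h\<close>
      sum_two_support[OF \<open>i < j\<close> \<open>j < h\<close> support]
    by (simp add: m_def)
  moreover have "0 < q"
    using q prime_gt_0_nat[OF prime_CHAR_finite_field[where ?'a = 'a]] by simp
  ultimately show ?thesis
    using \<open>a i \<noteq> 0\<close> \<open>a j \<noteq> 0\<close> by (auto simp: power_0_left)
qed

lemma coprime_shift_iff_const:
  fixes P :: "nat \<Rightarrow> bool"
  assumes "coprime d h" and "r < h"
    and shift: "\<And>t. t < h \<Longrightarrow> t \<noteq> r \<Longrightarrow> P t \<longleftrightarrow> P ((t + d) mod h)"
    and "t < h"
  shows "P t \<longleftrightarrow> P r"
proof -
  define w where "w k = (r + k * d) mod h" for k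
  have w_Suc: "w (Suc k) = (w k + d) mod h" for k
    by (simp add: w_def mod_add_left_eq mod_add_right_eq add_ac)
  have w_less: "w k < h" for k
    using \<open>r < h\<close> by (simp add: w_def)
  have w_ne: "w k \<noteq> r" if "0 < k" "k < h" for k
  proof
    assume "w k = r"
    then have "[r + k * d = r] (mod h)"
      using \<open>r < h\<close> by (simp add: w_def cong_def)
    then have "h dvd k * d"
      by (simp add: cong_add_lcancel_0_nat cong_0_iff)
    then have "h dvd k"
      using \<open>coprime d h\<close> by (simp add: coprime_commute coprime_dvd_mult_left_iff)
    then show False
      using that by (auto dest: dvd_imp_le)
  qed
  have orbit: "P (w k) \<longleftrightarrow> P r" if "k \<le> h" "0 < k" for k
    using that
  proof (induction k rule: inc_induct)
    case base
    show ?case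
      using \<open>r < h\<close> by (simp add: w_def)
  next
    case (step k)
    have "P (w k) \<longleftrightarrow> P (w (Suc k))"
      unfolding w_Suc using step.hyps step.prems by (intro shift w_less) (simp add: w_ne)
    with step.IH show ?case
      by simp
  qed
  obtain k where "[d * k = t + h - r] (mod h)"
    using cong_solve_dvd_nat[of d h "t + h - r"] \<open>coprime d h\<close> by auto
  then have "[r + k * d = r + (t + h - r)] (mod h)"
    by (simp add: cong_add_lcancel_nat mult.commute)
  then have "w k = t"
    using \<open>r < h\<close> \<open>t < h\<close> by (simp add: w_def cong_def)
  moreover have "w k = w (k mod h)"
    unfolding w_def by (metis mod_add_right_eq mod_mult_left_eq)
  ultimately show ?thesis
    using orbit[of "k mod h"] \<open>r < h\<close> \<open>t < h\<close>
    by (cases "k mod h = 0") (auto simp: w_def)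
qed

theorem lemma5p14:
  fixes q h :: nat and f fbar :: "nat \<Rightarrow> 'a::{finite,field}"
  assumes q_pp: "\<exists>p n. prime p \<and> n > 0 \<and> q = p ^ n"
    and card_field: "card (UNIV :: 'a set) = q ^ h"
    and invertible: "bij (lin_poly q h f)"
    and two_coeffs: "card {i. i < h \<and> f i \<noteq> 0} = 2"
    and not_semilinear: "\<forall>K. is_subfield K \<and> Fq q \<subset> K \<longrightarrow> \<not> semilinear_over K (lin_poly q h f)"
    and inverse: "\<forall>x. lin_poly q h fbar x = inv (lin_poly q h f) x"
  shows "\<forall>i<h. fbar i \<noteq> 0"
proof -
  have "2 \<le> h"
    using card_mono[of "{..<h}" "{i. i < h \<and> f i \<noteq> 0}"] two_coeffs by auto
  then obtain n where "0 < n" and q: "q = CHAR('a) ^ n"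
    using CHAR_power_of_prime_power_card[OF q_pp card_field] by auto
  obtain i j where ij: "i < j" "j < h" "f i \<noteq> 0" "f j \<noteq> 0"
    and support: "\<And>l. l < h \<Longrightarrow> l \<noteq> i \<Longrightarrow> l \<noteq> j \<Longrightarrow> f l = 0"
    using card_support_eq_2E[OF two_coeffs] by blast
  have F: "lin_poly q h f x = f i * x ^ (q ^ i) + f j * x ^ (q ^ j)" for x
    unfolding lin_poly_def by (rule sum_two_support[OF ij(1,2) support])
  have "coprime (j - i) h"
    using coprime_of_not_semilinear_two_term[OF q \<open>0 < n\<close> card_field F] ij not_semilinear by simp
  have right_inverse: "lin_poly q h f (lin_poly q h fbar x) = x" for x
    using inverse invertible by (simp add: bij_is_surj surj_f_inv_f)
  have zero_iff: "fbar t = 0 \<longleftrightarrow> fbar ((h - j) mod h) = 0" if "t < h" for t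
    using coprime_shift_iff_const[OF \<open>coprime (j - i) h\<close>, of "(h - j) mod h" "\<lambda>t. fbar t = 0" t]
      two_term_right_inverse_coeff_eq_0_iff[OF q \<open>0 < n\<close> card_field ij support right_inverse]
      that \<open>2 \<le> h\<close>
    by simp
  have "0 < q"
    using two_le_CHAR_power[OF \<open>0 < n\<close>, where ?'a = 'a] q by linarith
  then obtain t where "t < h" and "fbar t \<noteq> 0"
    using lin_poly_right_inverse_nonzero[OF _ right_inverse] by blast
  then show ?thesis
    using zero_iff by blast
qed

end
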